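(* Let $D$ be a finite distributive lattice with exactly two coatoms and let $Q=D\setminus\{1_D\}$. Then there is no algebra $A$ with a lattice isomorphism $\phi\colon\mathrm{Con}(A)\to D$ such that $\phi(\mathrm{Princ}(A))=Q$.
   Context: For an algebra $A$, $\mathrm{Con}(A)$ is its congruence lattice and $\mathrm{Princ}(A)$ its set of principal congruences $\mathrm{con}(a,b)$, $a,b\in A$. *)

theory Defs
  imports Main
begin

text \<open>A (universal) algebra is a carrier set A together with a set F of finitary
  operations, each given as a pair (arity n, f) where f acts on argument lists of
  length n; the operations must map the carrier into itself.\<close>

definition is_algebra :: "'a set \<Rightarrow> (nat \<times> ('a list \<Rightarrow> 'a)) set \<Rightarrow> bool" where
  "is_algebra A F \<longleftrightarrow>
     (\<forall>(n, f) \<in> F. \<forall>xs. length xs = n \<and> set xs \<subseteq> A \<longrightarrow> f xs \<in> A)"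

definition congruences :: "'a set \<Rightarrow> (nat \<times> ('a list \<Rightarrow> 'a)) set \<Rightarrow> 'a rel set" where
  "congruences A F = {\<theta>. equiv A \<theta> \<and>
     (\<forall>(n, f) \<in> F. \<forall>xs ys. length xs = n \<and> length ys = n \<and>
        list_all2 (\<lambda>x y. (x, y) \<in> \<theta>) xs ys \<longrightarrow> (f xs, f ys) \<in> \<theta>)}"

definition con :: "'a set \<Rightarrow> (nat \<times> ('a list \<Rightarrow> 'a)) set \<Rightarrow> 'a \<Rightarrow> 'a \<Rightarrow> 'a rel" where
  "con A F a b = \<Inter> {\<theta> \<in> congruences A F. (a, b) \<in> \<theta>}"

definition principal_congruences :: "'a set \<Rightarrow> (nat \<times> ('a list \<Rightarrow> 'a)) set \<Rightarrow> 'a rel set" where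
  "principal_congruences A F = {con A F a b | a b. a \<in> A \<and> b \<in> A}"

definition coatom :: "'d::bounded_lattice \<Rightarrow> bool" where
  "coatom c \<longleftrightarrow> c \<noteq> top \<and> (\<forall>x. c \<le> x \<longrightarrow> x = c \<or> x = top)"

end

theory Submission
  imports Defs
begin

text \<open>Every element of D other than 1 lies below one of the two coatoms, and every principal
  congruence is mapped to such an element. Hence, if \<theta>1 and \<theta>2 are the congruences
  corresponding to the coatoms, every pair (x, y) lies in con(x, y) \<subseteq> \<theta>1 \<union> \<theta>2. But the full
  relation on a set is never the union of two proper equivalence relations.\<close>

lemma full_relation_in_congruences:
  assumes "is_algebra A F"
  shows "A \<times> A \<in> congruences A F"
proof -
  have "equiv A (A \<times> A)" by (auto simp: equiv_def refl_on_def sym_def trans_def)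
  moreover have "(f xs, f ys) \<in> A \<times> A"
    if "(n, f) \<in> F" "length xs = n" "length ys = n"
      and "list_all2 (\<lambda>x y. (x, y) \<in> A \<times> A) xs ys" for n f xs ys
  proof -
    have "set xs \<subseteq> A" "set ys \<subseteq> A"
      using that(4) by (auto simp: list_all2_conv_all_nth in_set_conv_nth)
    then show ?thesis using assms that(1-3) unfolding is_algebra_def by auto
  qed
  ultimately show ?thesis unfolding congruences_def by fastforce
qed

lemma congruences_subset_full:
  "\<theta> \<in> congruences A F \<Longrightarrow> \<theta> \<subseteq> A \<times> A"
  unfolding congruences_def equiv_def refl_on_def by blast

lemma Inter_congruences:
  assumes "S \<subseteq> congruences A F" "S \<noteq> {}"
  shows "\<Inter>S \<in> congruences A F"
proof -
  have equivs: "equiv A \<theta>" if "\<theta> \<in> S" for \<theta>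
    using assms(1) that unfolding congruences_def by auto
  have "equiv A (\<Inter>S)"
  proof (rule equivI)
    show "\<Inter>S \<subseteq> A \<times> A"
      using equivs assms(2) unfolding equiv_def refl_on_def by blast
    show "refl_on A (\<Inter>S)"
      using equivs assms(2) unfolding equiv_def refl_on_def by blast
    show "sym (\<Inter>S)" using equivs unfolding equiv_def sym_def by blast
    show "trans (\<Inter>S)" using equivs unfolding equiv_def trans_def by blast
  qed
  moreover have "(f xs, f ys) \<in> \<theta>"
    if "(n, f) \<in> F" "length xs = n" "length ys = n"
      and "list_all2 (\<lambda>x y. (x, y) \<in> \<Inter>S) xs ys" and "\<theta> \<in> S" for n f xs ys \<theta>
  proof -
    have "list_all2 (\<lambda>x y. (x, y) \<in> \<theta>) xs ys"
      using that(4) by (rule list_all2_mono) (use that(5) in auto)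
    then show ?thesis using assms(1) that(1-3,5) unfolding congruences_def by fastforce
  qed
  ultimately show ?thesis unfolding congruences_def by fastforce
qed

lemma con_in_congruences:
  assumes "is_algebra A F" "a \<in> A" "b \<in> A"
  shows "con A F a b \<in> congruences A F"
  unfolding con_def
  by (rule Inter_congruences) (use full_relation_in_congruences[OF assms(1)] assms(2,3) in auto)

lemma pair_in_con: "(a, b) \<in> con A F a b"
  unfolding con_def by auto

lemma full_relation_eq_union_equiv:
  assumes "equiv A r" "equiv A s" "A \<times> A \<subseteq> r \<union> s"
  shows "r = A \<times> A \<or> s = A \<times> A"
proof (rule ccontr)
  assume "\<not> ?thesis"
  moreover have "r \<subseteq> A \<times> A" "s \<subseteq> A \<times> A"
    using assms(1,2) unfolding equiv_def refl_on_def by auto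
  ultimately obtain x y u v where
    "x \<in> A" "y \<in> A" "(x, y) \<notin> r" "u \<in> A" "v \<in> A" "(u, v) \<notin> s"
    by blast
  then have "(x, y) \<in> s" "(u, v) \<in> r" using assms(3) by auto
  \<comment> \<open>one of x, y is not r-related to u; that element is then s-related to both u and v\<close>
  have "(x, u) \<notin> r \<or> (y, u) \<notin> r"
    using assms(1) \<open>(x, y) \<notin> r\<close> unfolding equiv_def sym_def trans_def by blast
  then obtain z where "z \<in> A" "(z, u) \<notin> r" using \<open>x \<in> A\<close> \<open>y \<in> A\<close> by blast
  then have "(z, u) \<in> s" "(z, v) \<notin> r"
    using assms(1,3) \<open>u \<in> A\<close> \<open>(u, v) \<in> r\<close> unfolding equiv_def sym_def trans_def by blast+
  then have "(z, v) \<in> s" using assms(3) \<open>z \<in> A\<close> \<open>v \<in> A\<close> by blast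
  then show False
    using assms(2) \<open>(z, u) \<in> s\<close> \<open>(u, v) \<notin> s\<close> unfolding equiv_def sym_def trans_def by blast
qed

lemma ex_coatom_above:
  fixes x :: "'d::{finite, bounded_lattice}"
  assumes "x \<noteq> top"
  shows "\<exists>c. coatom c \<and> x \<le> c"
proof -
  obtain m where "m \<noteq> top" "x \<le> m" "\<forall>y. y \<noteq> top \<longrightarrow> m \<le> y \<longrightarrow> m = y"
    using finite_has_maximal2[of "{y::'d. y \<noteq> top}" x] assms by auto
  then show ?thesis unfolding coatom_def by blast
qed

lemma order_iso_full_relation:
  assumes "is_algebra A F"
    and "bij_betw \<phi> (congruences A F) (UNIV :: 'd::bounded_lattice set)"
    and "\<forall>\<theta>\<in>congruences A F. \<forall>\<psi>\<in>congruences A F. \<theta> \<subseteq> \<psi> \<longleftrightarrow> \<phi> \<theta> \<le> \<phi> \<psi>"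
  shows "\<phi> (A \<times> A) = top"
proof -
  obtain \<psi> where "\<psi> \<in> congruences A F" "\<phi> \<psi> = top"
    using assms(2) by (metis bij_betw_iff_bijections UNIV_I)
  then show ?thesis
    using assms(3) full_relation_in_congruences[OF assms(1)] congruences_subset_full
    by (metis top.extremum_unique)
qed

lemma full_relation_subset_union_coatom_preimages:
  fixes \<phi> :: "'a rel \<Rightarrow> 'd::{finite, bounded_lattice}"
  assumes alg: "is_algebra A F"
    and ord: "\<forall>\<theta>\<in>congruences A F. \<forall>\<psi>\<in>congruences A F. \<theta> \<subseteq> \<psi> \<longleftrightarrow> \<phi> \<theta> \<le> \<phi> \<psi>"
    and proper: "\<forall>\<theta>\<in>principal_congruences A F. \<phi> \<theta> \<noteq> top"
    and \<theta>: "\<theta>1 \<in> congruences A F" "\<theta>2 \<in> congruences A F"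
    and coatoms: "{c. coatom c} = {\<phi> \<theta>1, \<phi> \<theta>2}"
  shows "A \<times> A \<subseteq> \<theta>1 \<union> \<theta>2"
proof (rule subrelI)
  fix x y assume "(x, y) \<in> A \<times> A"
  then have "x \<in> A" "y \<in> A" by auto
  then have con: "con A F x y \<in> congruences A F"
    using con_in_congruences[OF alg] by blast
  have "con A F x y \<in> principal_congruences A F"
    using \<open>x \<in> A\<close> \<open>y \<in> A\<close> unfolding principal_congruences_def by blast
  then obtain c where "coatom c" "\<phi> (con A F x y) \<le> c"
    using proper ex_coatom_above by blast
  moreover have "c = \<phi> \<theta>1 \<or> c = \<phi> \<theta>2"
    using coatoms \<open>coatom c\<close> by blast
  ultimately have "con A F x y \<subseteq> \<theta>1 \<or> con A F x y \<subseteq> \<theta>2"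
    using ord con \<theta> by auto
  then show "(x, y) \<in> \<theta>1 \<union> \<theta>2"
    using pair_in_con[of x y A F] by blast
qed

theorem mainTheorem12:
  fixes A :: "'a set" and F :: "(nat \<times> ('a list \<Rightarrow> 'a)) set"
    and \<phi> :: "'a rel \<Rightarrow> 'd::{finite, distrib_lattice, bounded_lattice}"
  assumes "card {c :: 'd. coatom c} = 2"
  shows "\<not> (is_algebra A F \<and>
             bij_betw \<phi> (congruences A F) (UNIV :: 'd set) \<and>
             (\<forall>\<theta>\<in>congruences A F. \<forall>\<psi>\<in>congruences A F. \<theta> \<subseteq> \<psi> \<longleftrightarrow> \<phi> \<theta> \<le> \<phi> \<psi>) \<and>
             \<phi> ` principal_congruences A F = UNIV - {top})"
proof
  assume "is_algebra A F \<and> bij_betw \<phi> (congruences A F) UNIV \<and>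
    (\<forall>\<theta>\<in>congruences A F. \<forall>\<psi>\<in>congruences A F. \<theta> \<subseteq> \<psi> \<longleftrightarrow> \<phi> \<theta> \<le> \<phi> \<psi>) \<and>
    \<phi> ` principal_congruences A F = UNIV - {top}"
  then have alg: "is_algebra A F" and bij: "bij_betw \<phi> (congruences A F) UNIV"
    and ord: "\<forall>\<theta>\<in>congruences A F. \<forall>\<psi>\<in>congruences A F. \<theta> \<subseteq> \<psi> \<longleftrightarrow> \<phi> \<theta> \<le> \<phi> \<psi>"
    and princ: "\<phi> ` principal_congruences A F = UNIV - {top}"
    by blast+
  have onto: "\<phi> ` congruences A F = UNIV"
    using bij by (rule bij_betw_imp_surj_on)
  obtain c1 c2 :: 'd where coatoms: "{c. coatom c} = {c1, c2}"
    using assms by (auto simp: card_2_iff)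
  obtain \<theta>1 \<theta>2 where \<theta>1: "\<theta>1 \<in> congruences A F" "\<phi> \<theta>1 = c1"
    and \<theta>2: "\<theta>2 \<in> congruences A F" "\<phi> \<theta>2 = c2"
    using onto by (metis UNIV_I imageE)
  have "A \<times> A \<subseteq> \<theta>1 \<union> \<theta>2"
    using full_relation_subset_union_coatom_preimages[OF alg ord _ \<theta>1(1) \<theta>2(1)] princ coatoms
      \<theta>1(2) \<theta>2(2) by blast
  moreover have "equiv A \<theta>1" "equiv A \<theta>2"
    using \<theta>1(1) \<theta>2(1) unfolding congruences_def by auto
  ultimately have "\<theta>1 = A \<times> A \<or> \<theta>2 = A \<times> A"
    using full_relation_eq_union_equiv by blast
  then have "c1 = top \<or> c2 = top"
    using order_iso_full_relation[OF alg bij ord] \<theta>1 \<theta>2 by auto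
  then show False
    using coatoms unfolding coatom_def by blast
qed

end
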